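(* Let $n=2$ agents have additive valuations over a finite set $G$ of indivisible goods. Then there exists a probability distribution over (complete) allocations that is ex-ante EF and ex-post EFX. *)

theory Defs
  imports "HOL-Probability.Probability_Mass_Function"
begin

definition agents :: "nat set" where "agents = {0, 1}"

definition val :: "(nat \<Rightarrow> 'g \<Rightarrow> real) \<Rightarrow> nat \<Rightarrow> 'g set \<Rightarrow> real" where
  "val v i S = (\<Sum>g\<in>S. v i g)"

definition complete_allocation :: "'g set \<Rightarrow> (nat \<Rightarrow> 'g set) \<Rightarrow> bool" where
  "complete_allocation G A \<longleftrightarrow>
     (\<Union>i\<in>agents. A i) = G \<and>
     (\<forall>i\<in>agents. \<forall>j\<in>agents. i \<noteq> j \<longrightarrow> A i \<inter> A j = {}) \<and>
     (\<forall>i. i \<notin> agents \<longrightarrow> A i = {})"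

definition EFX :: "(nat \<Rightarrow> 'g \<Rightarrow> real) \<Rightarrow> (nat \<Rightarrow> 'g set) \<Rightarrow> bool" where
  "EFX v A \<longleftrightarrow> (\<forall>i\<in>agents. \<forall>j\<in>agents. \<forall>g\<in>A j.
      val v i (A i) \<ge> val v i (A j - {g}))"

definition ex_ante_EF :: "(nat \<Rightarrow> 'g \<Rightarrow> real) \<Rightarrow> (nat \<Rightarrow> 'g set) pmf \<Rightarrow> bool" where
  "ex_ante_EF v p \<longleftrightarrow> (\<forall>i\<in>agents. \<forall>j\<in>agents.
      measure_pmf.expectation p (\<lambda>A. val v i (A i)) \<ge> measure_pmf.expectation p (\<lambda>A. val v i (A j)))"

definition ex_post_EFX :: "(nat \<Rightarrow> 'g \<Rightarrow> real) \<Rightarrow> (nat \<Rightarrow> 'g set) pmf \<Rightarrow> bool" where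
  "ex_post_EFX v p \<longleftrightarrow> (\<forall>A\<in>set_pmf p. EFX v A)"

end

theory Submission
  imports Defs
begin

text \<open>Run cut-and-choose in both directions, each with probability 1/2. As cutter, an agent
  proposes a split of \<open>G\<close> of minimal imbalance for its own valuation whose heavier side
  contains only goods of positive value. Removing a good from the heavier side then leaves
  it no more valuable than the lighter side (otherwise moving that good across would give
  a more balanced split), so the cutter is EFX towards either part, while the chooser is
  envy-free. Ex ante, an agent loses at most its own minimal imbalance when it cuts and
  gains at least that much when it chooses, since the other agent's split is at least as
  imbalanced in its eyes.\<close>

definition imbalance :: "('g \<Rightarrow> real) \<Rightarrow> 'g set \<Rightarrow> 'g set \<Rightarrow> real" where
  "imbalance w G S = \<bar>sum w S - sum w (G - S)\<bar>"

definition EFX_cut :: "('g \<Rightarrow> real) \<Rightarrow> 'g set \<Rightarrow> 'g set \<Rightarrow> bool" where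
  "EFX_cut w X Y \<longleftrightarrow>
     (\<forall>g\<in>X. sum w (X - {g}) \<le> sum w Y) \<and> (\<forall>g\<in>Y. sum w (Y - {g}) \<le> sum w X)"

lemma imbalance_Diff:
  "S \<subseteq> G \<Longrightarrow> imbalance w G (G - S) = imbalance w G S"
  unfolding imbalance_def by (simp add: double_diff abs_minus_commute)

lemma ex_min_imbalance:
  assumes "finite G"
  shows "\<exists>X\<subseteq>G. \<forall>S\<subseteq>G. imbalance w G X \<le> imbalance w G S"
proof -
  obtain X where "is_arg_min (imbalance w G) (\<lambda>S. S \<in> Pow G) X"
    using ex_is_arg_min_if_finite[of "Pow G" "imbalance w G"] assms by auto
  then show ?thesis
    unfolding is_arg_min_def by (meson PowD PowI not_le)
qed

lemma ex_min_imbalance_positive_heavy_side: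
  assumes "finite G"
  shows "\<exists>X\<subseteq>G. sum w (G - X) \<le> sum w X \<and> (\<forall>g\<in>X. w g \<noteq> 0) \<and>
           (\<forall>S\<subseteq>G. imbalance w G X \<le> imbalance w G S)"
proof -
  obtain S where S: "S \<subseteq> G" "\<forall>T\<subseteq>G. imbalance w G S \<le> imbalance w G T"
    using ex_min_imbalance[OF assms, where w = w] by blast
  obtain H where H: "H \<subseteq> G" "sum w (G - H) \<le> sum w H"
      and min: "\<forall>T\<subseteq>G. imbalance w G H \<le> imbalance w G T"
  proof (cases "sum w (G - S) \<le> sum w S")
    case True
    then show ?thesis using that S by blast
  next
    case False
    then show ?thesis
      using that[of "G - S"] S imbalance_Diff[OF \<open>S \<subseteq> G\<close>] by (simp add: double_diff)
  qed
  define X where "X = {g\<in>H. w g \<noteq> 0}"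
  have "X \<subseteq> H" by (auto simp: X_def)
  have fin: "finite H" "finite (G - X)"
    using H(1) assms finite_subset by auto
  have sum_X: "sum w X = sum w H"
    unfolding X_def by (rule sum.mono_neutral_left[OF fin(1)]) auto
  have sum_G_X: "sum w (G - X) = sum w (G - H)"
    by (rule sum.mono_neutral_right[OF fin(2)]) (use \<open>X \<subseteq> H\<close> in \<open>auto simp: X_def\<close>)
  show ?thesis
  proof (intro exI[of _ X] conjI)
    show "X \<subseteq> G" using \<open>X \<subseteq> H\<close> H(1) by blast
    show "sum w (G - X) \<le> sum w X" using H(2) sum_X sum_G_X by simp
    show "\<forall>g\<in>X. w g \<noteq> 0" by (simp add: X_def)
    show "\<forall>S\<subseteq>G. imbalance w G X \<le> imbalance w G S"
      using min sum_X sum_G_X by (simp add: imbalance_def)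
  qed
qed

lemma EFX_cut_if_min_imbalance:
  assumes fin: "finite G" and nonneg: "\<forall>g\<in>G. 0 \<le> w g" and "X \<subseteq> G"
    and heavy: "sum w (G - X) \<le> sum w X" and pos: "\<forall>g\<in>X. w g \<noteq> 0"
    and min: "\<forall>S\<subseteq>G. imbalance w G X \<le> imbalance w G S"
  shows "EFX_cut w X (G - X)"
  unfolding EFX_cut_def
proof (intro conjI ballI)
  fix g assume "g \<in> X"
  have "finite X" using \<open>X \<subseteq> G\<close> fin finite_subset by auto
  have wg: "0 < w g" using \<open>g \<in> X\<close> \<open>X \<subseteq> G\<close> nonneg pos by force
  have removed: "sum w (X - {g}) = sum w X - w g"
    using \<open>g \<in> X\<close> \<open>finite X\<close> by (simp add: sum_diff1)
  have "G - (X - {g}) = insert g (G - X)" using \<open>g \<in> X\<close> \<open>X \<subseteq> G\<close> by auto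
  then have added: "sum w (G - (X - {g})) = sum w (G - X) + w g"
    using \<open>g \<in> X\<close> fin by simp
  have "sum w X - sum w (G - X) \<le> \<bar>(sum w X - w g) - (sum w (G - X) + w g)\<bar>"
    using min[rule_format, of "X - {g}"] \<open>X \<subseteq> G\<close> heavy removed added
    by (auto simp: imbalance_def)
  then show "sum w (X - {g}) \<le> sum w (G - X)"
    using wg removed by linarith
next
  fix g assume "g \<in> G - X"
  have "sum w (G - X - {g}) \<le> sum w (G - X)"
    by (rule sum_mono2) (use fin nonneg in auto)
  then show "sum w (G - X - {g}) \<le> sum w X" using heavy by linarith
qed

lemma ex_min_imbalance_EFX_cut:
  assumes "finite G" and "\<forall>g\<in>G. 0 \<le> w g"
  shows "\<exists>X\<subseteq>G. EFX_cut w X (G - X) \<and> (\<forall>S\<subseteq>G. imbalance w G X \<le> imbalance w G S)"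
proof -
  obtain X where X: "X \<subseteq> G" "sum w (G - X) \<le> sum w X" "\<forall>g\<in>X. w g \<noteq> 0"
      and min: "\<forall>S\<subseteq>G. imbalance w G X \<le> imbalance w G S"
    using ex_min_imbalance_positive_heavy_side[OF assms(1), where w = w] by blast
  have "EFX_cut w X (G - X)" by (rule EFX_cut_if_min_imbalance[OF assms X min])
  then show ?thesis using X(1) min by blast
qed

lemma val_remove_le:
  assumes "\<forall>x\<in>S. 0 \<le> v i x"
  shows "val v i (S - {g}) \<le> val v i S"
proof (cases "finite S")
  case True
  then show ?thesis unfolding val_def by (rule sum_mono2) (use assms in auto)
qed (simp add: val_def)

definition assign :: "nat \<Rightarrow> 'g set \<Rightarrow> 'g set \<Rightarrow> nat \<Rightarrow> 'g set" where
  "assign c P Q i = (if i = c then P else if i = 1 - c then Q else {})"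

definition cut_and_choose :: "(nat \<Rightarrow> 'g \<Rightarrow> real) \<Rightarrow> nat \<Rightarrow> 'g set \<Rightarrow> 'g set \<Rightarrow> nat \<Rightarrow> 'g set" where
  "cut_and_choose v c X Y = (if val v c Y \<le> val v c X then assign c X Y else assign c Y X)"

lemma agents_cases: "c \<in> agents \<Longrightarrow> c = 0 \<or> c = 1"
  by (simp add: agents_def)

lemma agents_other: "c \<in> agents \<Longrightarrow> 1 - c \<in> agents \<and> 1 - c \<noteq> c \<and> 1 - (1 - c) = c"
  by (auto simp: agents_def)

lemma complete_allocation_assign:
  assumes "c \<in> agents" and "P \<union> Q = G" and "P \<inter> Q = {}"
  shows "complete_allocation G (assign c P Q)"
  using agents_cases[OF assms(1)] assms(2,3)
  by (auto simp: complete_allocation_def agents_def assign_def)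

lemma complete_allocation_cut_and_choose:
  assumes "c \<in> agents" and "X \<subseteq> G"
  shows "complete_allocation G (cut_and_choose v c X (G - X))"
proof -
  have "complete_allocation G (assign c X (G - X))" "complete_allocation G (assign c (G - X) X)"
    by (rule complete_allocation_assign[OF assms(1)]; use assms(2) in blast)+
  then show ?thesis by (simp add: cut_and_choose_def)
qed

lemma EFX_assign:
  assumes "c \<in> agents" and nonneg: "\<forall>i\<in>agents. \<forall>g\<in>P \<union> Q. 0 \<le> v i g"
    and chooser: "val v c Q \<le> val v c P"
    and cutter: "\<forall>g\<in>P. val v (1 - c) (P - {g}) \<le> val v (1 - c) Q"
  shows "EFX v (assign c P Q)"
  unfolding EFX_def
proof (intro ballI)
  fix i j g assume "i \<in> agents" "j \<in> agents" "g \<in> assign c P Q j"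
  have "i = j \<or> (i = c \<and> j = 1 - c) \<or> (i = 1 - c \<and> j = c)"
    using \<open>i \<in> agents\<close> \<open>j \<in> agents\<close> \<open>c \<in> agents\<close> by (auto simp: agents_def)
  moreover have "val v i (S - {g}) \<le> val v i S" if "S \<in> {P, Q}" for S
    using val_remove_le[of S v i g] nonneg \<open>i \<in> agents\<close> that by blast
  ultimately show "val v i (assign c P Q j - {g}) \<le> val v i (assign c P Q i)"
    using agents_other[OF \<open>c \<in> agents\<close>] chooser cutter \<open>g \<in> assign c P Q j\<close>
    by (auto simp: assign_def intro: order.trans)
qed

lemma EFX_cut_and_choose:
  assumes "c \<in> agents" and "\<forall>i\<in>agents. \<forall>g\<in>X \<union> Y. 0 \<le> v i g"
    and "EFX_cut (v (1 - c)) X Y"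
  shows "EFX v (cut_and_choose v c X Y)"
  using assms EFX_assign[of c X Y v] EFX_assign[of c Y X v]
  by (auto simp: cut_and_choose_def EFX_cut_def val_def Un_commute)

lemma cut_and_choose_chooser_gain:
  assumes "c \<in> agents"
  shows "val v c (cut_and_choose v c X Y c) - val v c (cut_and_choose v c X Y (1 - c))
           = \<bar>val v c X - val v c Y\<bar>"
  using agents_other[OF assms] by (auto simp: cut_and_choose_def assign_def)

lemma cut_and_choose_cutter_loss:
  assumes "c \<in> agents"
  shows "val v (1 - c) (cut_and_choose v c X Y c) - val v (1 - c) (cut_and_choose v c X Y (1 - c))
           \<le> \<bar>val v (1 - c) X - val v (1 - c) Y\<bar>"
  using agents_other[OF assms] by (auto simp: cut_and_choose_def assign_def)

definition half_mix :: "'a \<Rightarrow> 'a \<Rightarrow> 'a pmf" where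
  "half_mix A B = map_pmf (\<lambda>b. if b then A else B) (bernoulli_pmf (1 / 2))"

lemma set_pmf_half_mix: "set_pmf (half_mix A B) = {A, B}"
  by (auto simp: half_mix_def)

lemma expectation_half_mix:
  fixes f :: "'a \<Rightarrow> real"
  shows "measure_pmf.expectation (half_mix A B) f = (f A + f B) / 2"
  by (simp add: half_mix_def)

lemma ex_ante_EF_half_mix_iff:
  "ex_ante_EF v (half_mix A B) \<longleftrightarrow>
     (\<forall>i\<in>agents. \<forall>j\<in>agents. val v i (A j) + val v i (B j) \<le> val v i (A i) + val v i (B i))"
  by (simp only: ex_ante_EF_def expectation_half_mix divide_le_cancel) simp

lemma envy_cut_and_choose_both_ways:
  assumes "i \<in> agents"
    and min: "imbalance (v i) G X \<le> imbalance (v i) G Y"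
  defines "A \<equiv> cut_and_choose v (1 - i) X (G - X)" and "B \<equiv> cut_and_choose v i Y (G - Y)"
  shows "val v i (A (1 - i)) + val v i (B (1 - i)) \<le> val v i (A i) + val v i (B i)"
proof -
  have "val v i (A (1 - i)) - val v i (A i) \<le> imbalance (v i) G X"
    using cut_and_choose_cutter_loss[of "1 - i" v X "G - X"] agents_other[OF \<open>i \<in> agents\<close>]
    by (simp add: A_def imbalance_def val_def)
  moreover have "val v i (B i) - val v i (B (1 - i)) = imbalance (v i) G Y"
    using cut_and_choose_chooser_gain[OF \<open>i \<in> agents\<close>, of v Y "G - Y"]
    by (simp add: B_def imbalance_def val_def)
  ultimately show ?thesis using min by linarith
qed

theorem proposition1:
  fixes G :: "'g set" and v :: "nat \<Rightarrow> 'g \<Rightarrow> real"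
  assumes "finite G"
    and "\<And>i g. i \<in> agents \<Longrightarrow> g \<in> G \<Longrightarrow> v i g \<ge> 0"
  shows "\<exists>p :: (nat \<Rightarrow> 'g set) pmf.
           (\<forall>A\<in>set_pmf p. complete_allocation G A) \<and> ex_ante_EF v p \<and> ex_post_EFX v p"
proof -
  have nonneg: "\<forall>i\<in>agents. \<forall>g\<in>G. 0 \<le> v i g" using assms(2) by blast
  have agents: "0 \<in> agents" "1 \<in> agents" by (simp_all add: agents_def)
  obtain X0 where X0: "X0 \<subseteq> G" "EFX_cut (v 0) X0 (G - X0)"
      "\<forall>S\<subseteq>G. imbalance (v 0) G X0 \<le> imbalance (v 0) G S"
    using ex_min_imbalance_EFX_cut[OF assms(1), where w = "v 0"] nonneg agents by blast
  obtain X1 where X1: "X1 \<subseteq> G" "EFX_cut (v 1) X1 (G - X1)"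
      "\<forall>S\<subseteq>G. imbalance (v 1) G X1 \<le> imbalance (v 1) G S"
    using ex_min_imbalance_EFX_cut[OF assms(1), where w = "v 1"] nonneg agents by blast
  define A where "A = cut_and_choose v 1 X0 (G - X0)"
  define B where "B = cut_and_choose v 0 X1 (G - X1)"
  have "complete_allocation G A" "complete_allocation G B"
    using complete_allocation_cut_and_choose X0(1) X1(1) agents by (auto simp: A_def B_def)
  moreover have "EFX v A" "EFX v B"
    unfolding A_def B_def
    by (rule EFX_cut_and_choose; use X0(1,2) X1(1,2) nonneg agents in \<open>simp add: Un_absorb1\<close>)+
  moreover have "ex_ante_EF v (half_mix A B)"
    unfolding ex_ante_EF_half_mix_iff
    using envy_cut_and_choose_both_ways[of 0 v G X0 X1] envy_cut_and_choose_both_ways[of 1 v G X1 X0]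
      X0(3) X1(3) X0(1) X1(1)
    by (auto simp: agents_def A_def B_def add.commute)
  ultimately show ?thesis
    by (intro exI[of _ "half_mix A B"]) (auto simp: set_pmf_half_mix ex_post_EFX_def)
qed

end
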